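(* Let $a\geq 1$ and $b\geq 2$ be integers. For Lebesgue-almost every $x\in D$ we have $\lim_{k\to\infty}T_{a,b}^k(x)=(0,\ldots,0,x_{a+2}^{\infty},\ldots,x_{a+b}^{\infty})$ (first $a+1$ coordinates equal to $0$), where $x_j^{\infty}>0$ for $j=a+2,\ldots,a+b$.
   Context: For $n\geq 1$ let $\Lambda^n=\{x\in\mathbb{R}^n : 0\leq x_1\leq\cdots\leq x_n\}$. For integers $a,b\geq 1$ the map $T_{a,b}:\Lambda^{a+b}\to\Lambda^{a+b}$ sends $x$ to the vector obtained by arranging $x_1,\ldots,x_a,\,x_{a+1}-x_a,\ldots,x_{a+b}-x_a$ in nondecreasing order. For $b\geq 2$, $D=\{x\in\Lambda^{a+b}: x_1+x_2+\cdots+x_{a+1}\leq x_{a+2}\}$. *)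

theory Defs
  imports "HOL-Analysis.Analysis" "HOL-Probability.Probability"
begin

text \<open>Points of R^n are functions nat => real, extensional on the index set {1..n}
  (coordinates are 1-based, as in the paper).\<close>

definition Lambda :: "nat \<Rightarrow> (nat \<Rightarrow> real) set" where
  "Lambda n = {x \<in> PiE {1..n} (\<lambda>_. UNIV).
      0 \<le> x 1 \<and> (\<forall>i. 1 \<le> i \<and> i < n \<longrightarrow> x i \<le> x (Suc i))}"

definition T :: "nat \<Rightarrow> nat \<Rightarrow> (nat \<Rightarrow> real) \<Rightarrow> (nat \<Rightarrow> real)" where
  "T a b x = (let L = sort (map x [1..<a+1] @ map (\<lambda>i. x i - x a) [a+1..<a+b+1])
              in restrict (\<lambda>i. L ! (i - 1)) {1..a+b})"

definition D :: "nat \<Rightarrow> nat \<Rightarrow> (nat \<Rightarrow> real) set" where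
  "D a b = {x \<in> Lambda (a+b). (\<Sum>i=1..a+1. x i) \<le> x (a+2)}"

definition lebesgue_n :: "nat \<Rightarrow> (nat \<Rightarrow> real) measure" where
  "lebesgue_n n = PiM {1..n} (\<lambda>_. lborel)"

end

theory Submission
  imports Defs
begin

text \<open>On D the last b - 1 entries of the list sorted by T stay above the first a + 1, so T
  subtracts x_a from each of the last b - 1 coordinates, while the first a + 1 coordinates of T x
  are x_1, ..., x_a, x_(a+1) - x_a in sorted order. Hence the sum s of the first a + 1 coordinates
  drops by x_a at each step; being nonnegative, it converges, so x_a tends to 0 along the orbit.
  The largest of the first a + 1 coordinates decreases to some L. If L > 0, then x_a eventually
  stays below L/2, T then freezes x_1, ..., x_a, and so x_a vanishes after finitely many steps.
  At that moment the first a + 1 coordinates are rational multiples of one number, and since the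
  first a + 1 coordinates of x are sums of those of T x, the same holds for the initial x_1, x_2,
  which fails for almost every x. So L = 0, s tends to 0, and the last coordinates converge to
  x_j - (x_1 + ... + x_(a+1)), which is positive as soon as x_(a+2) differs from
  x_1 + ... + x_(a+1).\<close>

declare upt_Suc [simp del]

lemma Lambda_mono:
  assumes x: "x \<in> Lambda n" and "1 \<le> i" "i \<le> j" "j \<le> n"
  shows "x i \<le> x j"
  using assms(3,4)
proof (induction j rule: dec_induct)
  case (step m)
  then have "x m \<le> x (Suc m)" using x \<open>1 \<le> i\<close> by (simp add: Lambda_def)
  with step show ?case by simp
qed simp

lemma Lambda_nonneg:
  assumes x: "x \<in> Lambda n" and "1 \<le> i" "i \<le> n"
  shows "0 \<le> x i"
  using Lambda_mono[OF x order_refl assms(2,3)] x by (auto simp: Lambda_def)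

definition head_entries :: "nat \<Rightarrow> (nat \<Rightarrow> real) \<Rightarrow> real list" where
  "head_entries a x = map x [1..<a+1] @ [x (a+1) - x a]"

context
  fixes a b :: nat
  assumes a: "1 \<le> a" and b: "2 \<le> b"
begin

lemma D_mono: "x \<in> D a b \<Longrightarrow> 1 \<le> i \<Longrightarrow> i \<le> j \<Longrightarrow> j \<le> a+b \<Longrightarrow> x i \<le> x j"
  by (auto simp: D_def intro: Lambda_mono)

lemma D_nonneg: "x \<in> D a b \<Longrightarrow> 1 \<le> i \<Longrightarrow> i \<le> a+b \<Longrightarrow> 0 \<le> x i"
  by (auto simp: D_def intro: Lambda_nonneg)

lemma D_gap:
  assumes x: "x \<in> D a b"
  shows "x a + x (a+1) \<le> x (a+2)"
proof -
  have "(\<Sum>i\<in>{a,a+1}. x i) \<le> (\<Sum>i=1..a+1. x i)"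
    by (rule sum_mono2) (use a b D_nonneg[OF x] in auto)
  also have "\<dots> \<le> x (a+2)" using x by (simp add: D_def)
  finally show ?thesis by simp
qed

lemma head_entries_bounds:
  assumes x: "x \<in> D a b" and "u \<in> set (head_entries a x)"
  shows "0 \<le> u" "u \<le> x (a+1)"
  using assms D_mono[OF x] D_nonneg[OF x] a b by (auto simp: head_entries_def)

lemma T_eq:
  assumes x: "x \<in> D a b"
  shows "T a b x =
    restrict (\<lambda>i. if i \<le> a+1 then sort (head_entries a x) ! (i-1) else x i - x a) {1..a+b}"
proof -
  define tail where "tail = map (\<lambda>i. x i - x a) [a+2..<a+b+1]"
  have split: "map x [1..<a+1] @ map (\<lambda>i. x i - x a) [a+1..<a+b+1] = head_entries a x @ tail"
    using b by (simp add: head_entries_def tail_def upt_conv_Cons)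
  have "sorted tail"
    unfolding tail_def sorted_map by (rule sorted_wrt_mono_rel[OF _ sorted_upt]) (auto intro: D_mono[OF x])
  moreover have "u \<le> v" if "u \<in> set (head_entries a x)" "v \<in> set tail" for u v
  proof -
    obtain j where "j \<in> {a+2..<a+b+1}" "v = x j - x a"
      using \<open>v \<in> set tail\<close> by (auto simp: tail_def)
    then show ?thesis
      using head_entries_bounds[OF x that(1)] D_gap[OF x] D_mono[OF x, of "a+2" j] by simp
  qed
  ultimately have sort_eq: "sort (head_entries a x @ tail) = sort (head_entries a x) @ tail"
    by (simp add: sort_append sorted_sort_id)
  have len: "length (sort (head_entries a x)) = a+1" by (simp add: head_entries_def)
  have tail_nth: "(sort (head_entries a x) @ tail) ! (i-1) = x i - x a" if "a+1 < i" "i \<le> a+b" for i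
  proof -
    have "(sort (head_entries a x) @ tail) ! (i-1) = tail ! (i - 1 - (a+1))"
      using that len by (simp add: nth_append_right)
    also have "\<dots> = x i - x a"
      using that by (auto simp: tail_def intro!: arg_cong[where f = x])
    finally show ?thesis .
  qed
  show ?thesis
    unfolding T_def Let_def split sort_eq
  proof (rule restrict_ext)
    fix i assume "i \<in> {1..a+b}"
    then show "(sort (head_entries a x) @ tail) ! (i-1)
        = (if i \<le> a+1 then sort (head_entries a x) ! (i-1) else x i - x a)"
      using len tail_nth by (auto simp: nth_append_left)
  qed
qed

lemma T_head:
  assumes "x \<in> D a b" "i \<in> {1..a+1}"
  shows "T a b x i = sort (head_entries a x) ! (i-1)"
  using assms b by (simp add: T_eq)

lemma T_tail:
  assumes "x \<in> D a b" "j \<in> {a+2..a+b}"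
  shows "T a b x j = x j - x a"
  using assms by (simp add: T_eq)

lemma map_T_head:
  assumes x: "x \<in> D a b"
  shows "map (T a b x) [1..<a+2] = sort (head_entries a x)"
proof (rule nth_equalityI)
  fix k assume "k < length (map (T a b x) [1..<a+2])"
  then show "map (T a b x) [1..<a+2] ! k = sort (head_entries a x) ! k"
    using T_head[OF x, of "k+1"] by simp
qed (simp add: head_entries_def)

lemma T_head_mem:
  assumes x: "x \<in> D a b" and "i \<in> {1..a+1}"
  shows "T a b x i \<in> set (head_entries a x)"
proof -
  have "T a b x i \<in> set (map (T a b x) [1..<a+2])" using assms(2) by auto
  then show ?thesis by (simp only: map_T_head[OF x] set_sort)
qed

lemma sum_head_T:
  assumes x: "x \<in> D a b"
  shows "(\<Sum>i=1..a+1. T a b x i) = (\<Sum>i=1..a+1. x i) - x a"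
proof -
  have sum_eq: "(\<Sum>i=1..a+1. f i) = sum_list (map f [1..<a+2])" for f :: "nat \<Rightarrow> real"
    by (simp add: sum_set_upt_conv_sum_list_nat[symmetric] atLeastLessThanSuc_atLeastAtMost)
  have "(\<Sum>i=1..a+1. T a b x i) = sum_list (map (T a b x) [1..<a+2])"
    by (rule sum_eq)
  also have "\<dots> = sum_list (head_entries a x)"
    by (metis map_T_head[OF x] mset_sort sum_mset_sum_list)
  also have "\<dots> = sum_list (map x [1..<a+2]) - x a"
    by (simp add: head_entries_def upt_Suc_append)
  also have "\<dots> = (\<Sum>i=1..a+1. x i) - x a"
    by (simp only: sum_eq)
  finally show ?thesis .
qed

lemma T_in_D:
  assumes x: "x \<in> D a b"
  shows "T a b x \<in> D a b"
proof -
  have len: "length (sort (head_entries a x)) = a+1" by (simp add: head_entries_def)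
  have mono: "T a b x i \<le> T a b x (Suc i)" if "1 \<le> i" "i < a+b" for i
  proof -
    consider "Suc i \<le> a+1" | "i = a+1" | "a+2 \<le> i" by linarith
    then show ?thesis
    proof cases
      case 1
      then show ?thesis
        using T_head[OF x, of i] T_head[OF x, of "Suc i"] that len by (auto intro: sorted_nth_mono)
    next
      case 2
      have "T a b x i \<le> x (a+1)"
        using head_entries_bounds(2)[OF x T_head_mem[OF x]] 2 by simp
      also have "\<dots> \<le> x (a+2) - x a" using D_gap[OF x] by simp
      also have "\<dots> = T a b x (Suc i)" using T_tail[OF x, of "a+2"] 2 b by simp
      finally show ?thesis .
    next
      case 3
      then show ?thesis
        using T_tail[OF x, of i] T_tail[OF x, of "Suc i"] D_mono[OF x, of i "Suc i"] that by simp
    qed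
  qed
  have "0 \<le> T a b x 1" using head_entries_bounds(1)[OF x T_head_mem[OF x, of 1]] by simp
  moreover have "T a b x \<in> PiE {1..a+b} (\<lambda>_. UNIV)" by (simp add: T_eq[OF x])
  moreover have "(\<Sum>i=1..a+1. T a b x i) \<le> T a b x (a+2)"
    using sum_head_T[OF x] T_tail[OF x, of "a+2"] b x by (simp add: D_def)
  ultimately show ?thesis using mono by (simp add: D_def Lambda_def)
qed

lemma funpow_T_in_D: "x \<in> D a b \<Longrightarrow> (T a b ^^ k) x \<in> D a b"
  by (induction k) (simp_all add: T_in_D)

lemma T_fixes_head:
  assumes x: "x \<in> D a b" and "2 * x a \<le> x (a+1)" and i: "i \<in> {1..a}"
  shows "T a b x i = x i"
proof -
  have "sorted (map x [1..<a+1])"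
    unfolding sorted_map by (rule sorted_wrt_mono_rel[OF _ sorted_upt]) (auto intro: D_mono[OF x])
  moreover have "x i \<le> x (a+1) - x a" if "i \<in> {1..a}" for i
    using D_mono[OF x, of i a] that assms(2) a b by simp
  ultimately have "sorted (head_entries a x)"
    by (auto simp: head_entries_def sorted_append)
  then have "T a b x i = head_entries a x ! (i-1)"
    using T_head[OF x, of i] i by (simp add: sorted_sort_id)
  also have "\<dots> = x i" using i by (auto simp: head_entries_def nth_append)
  finally show ?thesis .
qed

lemma head_in_if_T_head_in:
  assumes x: "x \<in> D a b"
    and add: "\<And>u v. u \<in> H \<Longrightarrow> v \<in> H \<Longrightarrow> u + v \<in> H"
    and TH: "\<forall>i\<in>{1..a+1}. T a b x i \<in> H"
  shows "\<forall>i\<in>{1..a+1}. x i \<in> H"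
proof -
  have "set (head_entries a x) = T a b x ` set [1..<a+2]"
    by (simp only: set_map[symmetric] map_T_head[OF x] set_sort)
  with TH have head: "set (head_entries a x) \<subseteq> H" by auto
  have "x (a+1) = x a + (x (a+1) - x a)" by simp
  moreover have "x a \<in> H" "x (a+1) - x a \<in> H" using head a by (auto simp: head_entries_def)
  ultimately have "x (a+1) \<in> H" using add by metis
  with head show ?thesis by (force simp: head_entries_def le_Suc_eq)
qed

lemma head_in_if_funpow_T_head_in:
  assumes "x \<in> D a b"
    and add: "\<And>u v. u \<in> H \<Longrightarrow> v \<in> H \<Longrightarrow> u + v \<in> H"
    and "\<forall>i\<in>{1..a+1}. (T a b ^^ k) x i \<in> H"
  shows "\<forall>i\<in>{1..a+1}. x i \<in> H"
  using assms(1,3)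
proof (induction k arbitrary: x)
  case (Suc k)
  then show ?case
    using head_in_if_T_head_in[OF Suc.prems(1) add] Suc.IH[OF T_in_D]
    by (simp add: funpow_Suc_right del: funpow.simps)
qed simp

(* Since x / 0 = 0 \<in> \<rat>, the hypothesis x 2 / x 1 \<notin> \<rat> includes x 1 \<noteq> 0. *)
lemma funpow_T_a_neq_0:
  assumes x: "x \<in> D a b" and irrational: "x 2 / x 1 \<notin> \<rat>"
  shows "(T a b ^^ k) x a \<noteq> 0"
proof
  define y where "y = (T a b ^^ k) x"
  assume "(T a b ^^ k) x a = 0"
  then have y_a: "y a = 0" by (simp add: y_def)
  have y: "y \<in> D a b" unfolding y_def by (rule funpow_T_in_D[OF x])
  define H where "H = (\<lambda>r. r * y (a+1)) ` \<rat>"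
  have add: "u + v \<in> H" if "u \<in> H" "v \<in> H" for u v
    using that unfolding H_def by (auto simp: distrib_right[symmetric] intro!: imageI Rats_add)
  have "\<forall>i\<in>{1..a+1}. y i \<in> H"
  proof
    fix i assume i: "i \<in> {1..a+1}"
    show "y i \<in> H"
    proof (cases "i \<le> a")
      case True
      then have "y i = 0 * y (a+1)" using D_nonneg[OF y, of i] D_mono[OF y, of i a] y_a i b by simp
      then show ?thesis unfolding H_def using Rats_0 by blast
    next
      case False
      then have "i = a+1" using i by simp
      then have "y i = 1 * y (a+1)" by simp
      then show ?thesis unfolding H_def using Rats_1 by blast
    qed
  qed
  then have "x 1 \<in> H" "x 2 \<in> H"
    using head_in_if_funpow_T_head_in[OF x add] a unfolding y_def by auto
  then obtain r s where "r \<in> \<rat>" "s \<in> \<rat>" "x 1 = r * y (a+1)" "x 2 = s * y (a+1)"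
    unfolding H_def by blast
  then have "x 2 / x 1 \<in> \<rat>" by (cases "y (a+1) = 0") simp_all
  with irrational show False by contradiction
qed

lemma funpow_T_a_tendsto_0:
  assumes x: "x \<in> D a b"
  shows "(\<lambda>k. (T a b ^^ k) x a) \<longlonglongrightarrow> 0"
proof -
  define s where "s k = (\<Sum>i=1..a+1. (T a b ^^ k) x i)" for k
  have step: "(T a b ^^ k) x a = s k - s (Suc k)" for k
    using sum_head_T[OF funpow_T_in_D[OF x]] by (simp add: s_def)
  have "0 \<le> (T a b ^^ k) x a" for k using D_nonneg[OF funpow_T_in_D[OF x], of a] a b by simp
  then have dec: "decseq s" using step by (intro decseq_SucI) force
  have "0 \<le> s k" for k
    unfolding s_def by (intro sum_nonneg) (use D_nonneg[OF funpow_T_in_D[OF x]] b in auto)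
  obtain L where "s \<longlonglongrightarrow> L" "\<forall>k. L \<le> s k"
    by (rule decseq_convergent[OF dec, of 0]) (use \<open>\<And>k. 0 \<le> s k\<close> in auto)
  then have "(\<lambda>k. s k - s (Suc k)) \<longlonglongrightarrow> L - L" by (intro tendsto_diff LIMSEQ_Suc)
  then show ?thesis by (simp add: step)
qed

lemma funpow_T_max_head_tendsto_0:
  assumes x: "x \<in> D a b" and irrational: "x 2 / x 1 \<notin> \<rat>"
  shows "(\<lambda>k. (T a b ^^ k) x (a+1)) \<longlonglongrightarrow> 0"
proof -
  define X where "X k = (T a b ^^ k) x" for k
  have XD: "X k \<in> D a b" for k unfolding X_def by (rule funpow_T_in_D[OF x])
  have XS: "X (Suc k) = T a b (X k)" for k by (simp add: X_def)
  have dec: "decseq (\<lambda>k. X k (a+1))"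
    using head_entries_bounds(2)[OF XD T_head_mem[OF XD]] by (intro decseq_SucI) (simp add: XS)
  have X_nonneg: "0 \<le> X k (a+1)" for k using D_nonneg[OF XD] b by simp
  obtain L where L: "(\<lambda>k. X k (a+1)) \<longlonglongrightarrow> L" "\<forall>k. L \<le> X k (a+1)"
    by (rule decseq_convergent[OF dec, of 0]) (use X_nonneg in auto)
  have "L \<le> 0"
  proof (rule ccontr)
    assume "\<not> L \<le> 0"
    have a_lim: "(\<lambda>k. X k a) \<longlonglongrightarrow> 0" unfolding X_def by (rule funpow_T_a_tendsto_0[OF x])
    have "eventually (\<lambda>k. X k a < L / 2) sequentially"
      using order_tendstoD(2)[OF a_lim, of "L / 2"] \<open>\<not> L \<le> 0\<close> by simp
    then obtain K where K: "\<forall>k\<ge>K. X k a < L / 2"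
      unfolding eventually_sequentially ..
    \<comment> \<open>from K on, 2 x_a \<le> x_(a+1), so the head is already sorted and T freezes x_1, ..., x_a\<close>
    have frozen: "X k a = X K a" if "K \<le> k" for k
      using that
    proof (induction k rule: dec_induct)
      case (step k)
      have "X k a < L / 2" using K step(1) by simp
      moreover have "L \<le> X k (a+1)" using L(2) by simp
      ultimately have "2 * X k a \<le> X k (a+1)" by linarith
      then have "T a b (X k) a = X k a" using T_fixes_head[OF XD, of k a] a by simp
      with step show ?case by (simp add: XS)
    qed simp
    have "(\<lambda>k. X k a) \<longlonglongrightarrow> X K a"
      by (intro tendsto_eventually eventually_sequentiallyI[of K]) (rule frozen)
    from this a_lim have "X K a = 0" by (rule LIMSEQ_unique)
    moreover have "X K a \<noteq> 0" unfolding X_def by (rule funpow_T_a_neq_0[OF x irrational])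
    ultimately show False by contradiction
  qed
  moreover have "0 \<le> L" using L(1) X_nonneg by (intro LIMSEQ_le_const) auto
  ultimately show ?thesis using L(1) by (simp add: X_def)
qed

lemma funpow_T_tail:
  assumes x: "x \<in> D a b" and j: "j \<in> {a+2..a+b}"
  shows "(T a b ^^ k) x j = x j - ((\<Sum>i=1..a+1. x i) - (\<Sum>i=1..a+1. (T a b ^^ k) x i))"
proof (induction k)
  case (Suc k)
  then show ?case
    using T_tail[OF funpow_T_in_D[OF x] j, of k] sum_head_T[OF funpow_T_in_D[OF x], of k] by simp
qed simp

lemma funpow_T_tendsto:
  assumes x: "x \<in> D a b" and irrational: "x 2 / x 1 \<notin> \<rat>"
    and gap: "x (a+2) \<noteq> (\<Sum>i=1..a+1. x i)"
  shows "\<exists>y. (\<forall>j\<in>{1..a+1}. y j = 0) \<and> (\<forall>j\<in>{a+2..a+b}. y j > 0) \<and>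
      (\<forall>j\<in>{1..a+b}. (\<lambda>k. (T a b ^^ k) x j) \<longlonglongrightarrow> y j)"
proof -
  note XD = funpow_T_in_D[OF x]
  have head_lim: "(\<lambda>k. (T a b ^^ k) x i) \<longlonglongrightarrow> 0" if "i \<in> {1..a+1}" for i
    using D_nonneg[OF XD, of i] D_mono[OF XD, of i "a+1"] that b
    by (intro real_tendsto_sandwich[OF _ _ tendsto_const funpow_T_max_head_tendsto_0[OF x irrational]])
      auto
  then have "(\<lambda>k. \<Sum>i=1..a+1. (T a b ^^ k) x i) \<longlonglongrightarrow> 0" by (intro tendsto_null_sum) auto
  then have "(\<lambda>k. x j - ((\<Sum>i=1..a+1. x i) - (\<Sum>i=1..a+1. (T a b ^^ k) x i)))
      \<longlonglongrightarrow> x j - ((\<Sum>i=1..a+1. x i) - 0)" for j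
    by (intro tendsto_diff tendsto_const)
  then have tail_lim: "(\<lambda>k. (T a b ^^ k) x j) \<longlonglongrightarrow> x j - (\<Sum>i=1..a+1. x i)"
    if "j \<in> {a+2..a+b}" for j
    by (simp add: funpow_T_tail[OF x that])
  have "(\<Sum>i=1..a+1. x i) < x j" if "j \<in> {a+2..a+b}" for j
    using x gap D_mono[OF x, of "a+2" j] that by (auto simp: D_def)
  then show ?thesis
  proof (intro exI[of _ "\<lambda>j. if j \<le> a+1 then 0 else x j - (\<Sum>i=1..a+1. x i)"] conjI ballI)
    fix j assume "j \<in> {1..a+b}"
    then show "(\<lambda>k. (T a b ^^ k) x j) \<longlonglongrightarrow> (if j \<le> a+1 then 0 else x j - (\<Sum>i=1..a+1. x i))"
      using head_lim[of j] tail_lim[of j] by (cases "j \<le> a+1") simp_all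
  qed simp_all
qed

end

lemma AE_PiM_lborel_component_neq:
  fixes g :: "('i \<Rightarrow> real) \<Rightarrow> real"
  assumes I: "finite I" "i \<in> I"
    and g: "g \<in> borel_measurable (PiM I (\<lambda>_. lborel))"
    and indep: "\<And>x t. g (x(i := t)) = g x"
  shows "AE x in PiM I (\<lambda>_. lborel). x i \<noteq> g x"
proof -
  interpret product_sigma_finite "\<lambda>_. lborel :: real measure" by standard
  define M where "M = PiM I (\<lambda>_. lborel :: real measure)"
  define N where "N = {x \<in> space M. x i = g x}"
  have "(\<lambda>x. x i) \<in> borel_measurable M"
    using measurable_component_singleton[OF I(2), of "\<lambda>_. lborel"] by (simp add: M_def)
  then have N: "N \<in> sets M"
    unfolding N_def using g by (intro borel_measurable_eq) (auto simp: M_def)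
  \<comment> \<open>every line parallel to the i-th axis meets the graph in the single point g x\<close>
  have line: "indicator N (x(i := t)) = (indicator {g x} t :: ennreal)"
    if "x \<in> space (PiM (I - {i}) (\<lambda>_. lborel))" for x t
  proof -
    have "x(i := t) \<in> space M" using that I(2) by (auto simp: M_def space_PiM PiE_def extensional_def)
    then show ?thesis using indep[of x t] by (auto simp: N_def indicator_def)
  qed
  have "emeasure M N = (\<integral>\<^sup>+ x. (\<integral>\<^sup>+ t. indicator N (x(i := t)) \<partial>lborel) \<partial>PiM (I - {i}) (\<lambda>_. lborel))"
    using product_nn_integral_insert[of "I - {i}" i "indicator N"] I N
    by (simp add: M_def insert_absorb)
  also have "\<dots> = 0" by (simp add: line cong: nn_integral_cong)
  finally have "AE x in M. x i \<noteq> g x" using AE_iff_measurable[OF N] by (simp add: N_def)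
  then show ?thesis unfolding M_def .
qed

lemma measurable_lebesgue_n_component:
  "i \<in> {1..n} \<Longrightarrow> (\<lambda>x. x i) \<in> borel_measurable (lebesgue_n n)"
  using measurable_component_singleton[of i "{1..n}" "\<lambda>_. lborel"] by (simp add: lebesgue_n_def)

lemma AE_lebesgue_n_ratio_notin_Rats:
  assumes "2 \<le> n"
  shows "AE x in lebesgue_n n. x 2 / x 1 \<notin> \<rat>"
proof -
  have i: "1 \<in> {1..n}" "2 \<in> {1..n}" using assms by auto
  have "AE x in lebesgue_n n. x 1 \<noteq> 0"
    unfolding lebesgue_n_def by (rule AE_PiM_lborel_component_neq[OF _ i(1)]) auto
  moreover have "AE x in lebesgue_n n. x 2 \<noteq> r * x 1" for r
    using measurable_lebesgue_n_component[OF i(1)] unfolding lebesgue_n_def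
    by (intro AE_PiM_lborel_component_neq[OF _ i(2)]) auto
  then have "AE x in lebesgue_n n. \<forall>r\<in>\<rat>. x 2 \<noteq> r * x 1"
    by (simp add: AE_ball_countable[OF countable_rat])
  ultimately show ?thesis
  proof eventually_elim
    case (elim x)
    show ?case
    proof
      assume "x 2 / x 1 \<in> \<rat>"
      with elim have "x 2 \<noteq> x 2 / x 1 * x 1" by blast
      with elim show False by simp
    qed
  qed
qed

lemma AE_lebesgue_n_component_neq_sum:
  assumes "j \<in> {1..n}" "I \<subseteq> {1..n}" "j \<notin> I"
  shows "AE x in lebesgue_n n. x j \<noteq> (\<Sum>i\<in>I. x i)"
  using assms measurable_lebesgue_n_component
  unfolding lebesgue_n_def
  by (intro AE_PiM_lborel_component_neq borel_measurable_sum) (auto intro!: sum.cong)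

theorem lemma4p7:
  fixes a b :: nat
  assumes "a \<ge> 1" and "b \<ge> 2"
  shows "AE x in lebesgue_n (a+b). x \<in> D a b \<longrightarrow>
           (\<exists>y :: nat \<Rightarrow> real.
              (\<forall>j\<in>{1..a+1}. y j = 0) \<and>
              (\<forall>j\<in>{a+2..a+b}. y j > 0) \<and>
              (\<forall>j\<in>{1..a+b}. (\<lambda>k. ((T a b) ^^ k) x j) \<longlonglongrightarrow> y j))"
proof -
  have "AE x in lebesgue_n (a+b). x 2 / x 1 \<notin> \<rat>"
    using assms by (intro AE_lebesgue_n_ratio_notin_Rats) simp
  moreover have "AE x in lebesgue_n (a+b). x (a+2) \<noteq> (\<Sum>i=1..a+1. x i)"
    using assms by (intro AE_lebesgue_n_component_neq_sum) auto
  ultimately show ?thesis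
    by eventually_elim (use funpow_T_tendsto[OF assms] in blast)
qed

end
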